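(* For every integer $n \geq 1$, the forgetful function \[\varphi_n: [S^n \times S^n, S^n \times S^n]^{\Delta} \longrightarrow [S^n \times S^n, S^n \times S^n]^{\ast}\] is injective; equivalently, the fundamental action of $\pi_{n+1}(S^n \times S^n) = \pi_{n+1}(S^n)\oplus\pi_{n+1}(S^n)$ on $[S^n \times S^n, S^n \times S^n]^{\Delta}$ is trivial.
   Context: Let $\Delta: D = S^n \to S^n \times S^n$ be the diagonal, viewed as a cofibration. For a cofibration $i: D \rightarrowtail X$ and a map $u: D \to U$, $[X,U]^u$ denotes the set of homotopy classes, relative to $D$, of maps $f: X \to U$ with $fi = u$; $[X,U]^{\ast}$ denotes pointed homotopy classes. Here $[S^n\times S^n, S^n\times S^n]^{\Delta}$ means $[X,U]^u$ with $X=U=S^n\times S^n$ and $u=\Delta$, and $\varphi_n$ sends the class of a map relative $D$ to the class of the same map relative the base point $\ast \in D$. The fundamental action: for a cofibration $D \rightarrowtail X$ and $u: D\to U$, let $\Sigma_{\ast} D$ be the pushout of $S^1 \times \ast \to \ast$ and $S^1 \times \ast \rightarrowtail S^1 \times D$; the group $[\Sigma_{\ast} D, U]^u$ (maps under $D$, i.e. pointed self-homotopies of $u$) acts on $[X,U]^u$ by extending such a homotopy from $D$ to a homotopy starting at $f$ via the homotopy extension property and taking the end map. For $D = S^n$ one has $[\Sigma_\ast D,U]^u \cong \pi_{n+1}(U)$. Two classes have the same image under the forgetful map iff they lie in the same orbit of this action. *)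

theory Defs
  imports "HOL-Analysis.Analysis"
begin

end

theory Submission
  imports Defs
begin

text \<open>Neither the dimension nor the base point matters: for any ANR \<open>S\<close>, two self-maps of
\<open>S \<times> S\<close> fixing the diagonal that are freely homotopic are already homotopic relative to the
diagonal. Given a homotopy \<open>K\<close> from \<open>f\<close> to \<open>g\<close>, the family
\<open>(a, b) \<mapsto> (fst (K (u, a, a)), snd (K (u, b, b)))\<close> is a loop of self-maps at the identity
which agrees with \<open>K\<close> on the diagonal. Running \<open>K\<close> and then this loop backwards after \<open>g\<close>
gives a homotopy from \<open>f\<close> to \<open>g\<close> whose restriction to the diagonal is a path followed by
its reverse; that restriction contracts onto the stationary homotopy, and homotopy extension
into the ANR \<open>S \<times> S\<close> turns the contraction into a homotopy relative to the diagonal.\<close>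

lemma homotopic_with_canonI:
  fixes h :: "real \<times> 'a::euclidean_space \<Rightarrow> 'b::euclidean_space"
  assumes P_local: "\<And>h k. (\<And>x. x \<in> S \<Longrightarrow> h x = k x) \<Longrightarrow> P h \<longleftrightarrow> P k"
    and "continuous_on ({0..1} \<times> S) h" "h \<in> {0..1} \<times> S \<rightarrow> U"
    and "\<And>x. x \<in> S \<Longrightarrow> h (0, x) = p x" "\<And>x. x \<in> S \<Longrightarrow> h (1, x) = q x"
    and "\<And>t. t \<in> {0..1} \<Longrightarrow> P (\<lambda>x. h (t, x))"
  shows "homotopic_with_canon P S U p q"
proof (subst homotopic_with)
  show "P h \<longleftrightarrow> P k" if "\<And>x. x \<in> topspace (top_of_set S) \<Longrightarrow> h x = k x" for h k
    using that by (intro P_local) simp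
qed (use assms(2-6) in \<open>intro exI[of _ h], simp\<close>)

lemma homotopic_with_canonE:
  fixes p :: "'a::euclidean_space \<Rightarrow> 'b::euclidean_space"
  assumes "homotopic_with_canon P S U p q"
  obtains h :: "real \<times> 'a \<Rightarrow> 'b"
  where "continuous_on ({0..1} \<times> S) h" "h \<in> {0..1} \<times> S \<rightarrow> U"
    "\<And>x. h (0, x) = p x" "\<And>x. h (1, x) = q x"
  using assms by (auto simp: homotopic_with_def)

lemma continuous_on_homotopy_join:
  fixes K1 K2 :: "real \<times> 'a::topological_space \<Rightarrow> 'b::topological_space"
  assumes K1: "continuous_on ({0..1} \<times> X) K1" and K2: "continuous_on ({0..1} \<times> X) K2"
    and "\<And>x. x \<in> X \<Longrightarrow> K1 (1, x) = K2 (0, x)"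
  shows "continuous_on ({0..1} \<times> X)
           (\<lambda>(t, x). if t \<le> 1/2 then K1 (2 * t, x) else K2 (2 * t - 1, x))"
proof -
  have "continuous_on ({0..1} \<times> X)
          (\<lambda>y. if fst y \<le> 1/2 then K1 (2 * fst y, snd y) else K2 (2 * fst y - 1, snd y))"
  proof (rule continuous_on_cases_le)
    show "continuous_on {y \<in> {0..1} \<times> X. fst y \<le> 1/2} (\<lambda>y. K1 (2 * fst y, snd y))"
      by (rule continuous_on_compose2[OF K1]) (auto intro!: continuous_intros)
    show "continuous_on {y \<in> {0..1} \<times> X. 1/2 \<le> fst y} (\<lambda>y. K2 (2 * fst y - 1, snd y))"
      by (rule continuous_on_compose2[OF K2]) (auto intro!: continuous_intros)
    show "K1 (2 * fst y, snd y) = K2 (2 * fst y - 1, snd y)"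
      if "y \<in> {0..1} \<times> X" "fst y = 1/2" for y
    proof -
      have "2 * fst y = 1"
        using that(2) by simp
      then show ?thesis
        using that(1) by (simp add: assms(3) mem_Times_iff)
    qed
  qed (auto intro!: continuous_intros)
  then show ?thesis
    by (simp add: case_prod_beta')
qed

definition diagonal_split :: "(real \<times> ('a \<times> 'a) \<Rightarrow> 'a \<times> 'a) \<Rightarrow> real \<times> ('a \<times> 'a) \<Rightarrow> 'a \<times> 'a"
  where "diagonal_split K = (\<lambda>(u, a, b). (fst (K (u, a, a)), snd (K (u, b, b))))"

lemma diagonal_split_diagonal [simp]: "diagonal_split K (u, x, x) = K (u, x, x)"
  by (simp add: diagonal_split_def)

lemma diagonal_split_eq:
  assumes "\<And>x. x \<in> S \<Longrightarrow> K (u, x, x) = (x, x)" and "z \<in> S \<times> S"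
  shows "diagonal_split K (u, z) = z"
  using assms by (auto simp: diagonal_split_def)

lemma continuous_on_diagonal_split:
  fixes K :: "real \<times> ('a::topological_space \<times> 'a) \<Rightarrow> 'a \<times> 'a"
  assumes "continuous_on ({0..1} \<times> (S \<times> S)) K"
  shows "continuous_on ({0..1} \<times> (S \<times> S)) (diagonal_split K)"
proof -
  have "continuous_on ({0..1} \<times> (S \<times> S)) (\<lambda>y. K (fst y, fst (snd y), fst (snd y)))"
       "continuous_on ({0..1} \<times> (S \<times> S)) (\<lambda>y. K (fst y, snd (snd y), snd (snd y)))"
    by (rule continuous_on_compose2[OF assms]; auto intro!: continuous_intros)+
  then show ?thesis
    unfolding diagonal_split_def case_prod_beta' by (intro continuous_intros)
qed

lemma diagonal_split_in_funspace:
  assumes "K \<in> {0..1} \<times> (S \<times> S) \<rightarrow> S \<times> S"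
  shows "diagonal_split K \<in> {0..1} \<times> (S \<times> S) \<rightarrow> S \<times> S"
  using assms by (fastforce simp: diagonal_split_def Pi_iff mem_Times_iff)

lemma homotopic_on_frame:
  fixes K :: "real \<times> 'a::euclidean_space \<Rightarrow> 'b::euclidean_space" and M :: "real \<times> real \<times> 'a \<Rightarrow> 'b"
  assumes D: "closedin (top_of_set X) D"
    and K: "continuous_on ({0..1} \<times> X) K" "K \<in> {0..1} \<times> X \<rightarrow> U"
    and M: "continuous_on ({0..1} \<times> {0..1} \<times> D) M" "M \<in> {0..1} \<times> {0..1} \<times> D \<rightarrow> U"
    and M_K: "\<And>t x. x \<in> D \<Longrightarrow> M (0, t, x) = K (t, x)"
    and M_ends: "\<And>s t x. x \<in> D \<Longrightarrow> t \<in> {0, 1} \<Longrightarrow> M (s, t, x) = K (t, x)"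
  shows "homotopic_with_canon (\<lambda>_. True) ({0..1} \<times> D \<union> {0, 1} \<times> X) U
           K (\<lambda>y. if snd y \<in> D then M (1, y) else K y)"
proof -
  have "D \<subseteq> X"
    using closedin_imp_subset[OF D] by simp
  define L where "L = (\<lambda>y. if snd (snd y) \<in> D then M y else K (snd y))"
  have "continuous_on ({0..1::real} \<times> {0..1::real} \<times> D \<union> {0..1} \<times> {0, 1} \<times> X) L"
    unfolding L_def
  proof (rule continuous_on_cases_local)
    obtain C where "closed C" "D = X \<inter> C"
      using D by (auto simp: closedin_closed)
    then show "closedin (top_of_set ({0..1::real} \<times> {0..1::real} \<times> D \<union> {0..1} \<times> {0, 1} \<times> X))
                 ({0..1} \<times> {0..1} \<times> D)"
      by (intro closedin_closed[THEN iffD2] exI[of _ "UNIV \<times> UNIV \<times> C"])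
        (auto intro: closed_Times)
    show "closedin (top_of_set ({0..1::real} \<times> {0..1::real} \<times> D \<union> {0..1} \<times> {0, 1} \<times> X))
                 ({0..1} \<times> {0, 1} \<times> X)"
      using \<open>D \<subseteq> X\<close>
      by (intro closedin_closed[THEN iffD2] exI[of _ "UNIV \<times> {0, 1} \<times> UNIV"])
        (auto intro!: closed_Times)
    show "continuous_on ({0..1::real} \<times> {0, 1::real} \<times> X) (\<lambda>y. K (snd y))"
      by (rule continuous_on_compose2[OF K(1)]) (auto intro!: continuous_intros)
    show "M y = K (snd y)"
      if y: "y \<in> {0..1} \<times> {0..1} \<times> D \<and> snd (snd y) \<notin> D \<or> y \<in> {0..1} \<times> {0, 1} \<times> X \<and> snd (snd y) \<in> D"
      for y
      using y M_ends by (cases y) auto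
  qed (fact M(1))
  moreover have "L \<in> {0..1} \<times> ({0..1} \<times> D \<union> {0, 1} \<times> X) \<rightarrow> U"
  proof
    fix y
    assume "y \<in> {0..1::real} \<times> ({0..1::real} \<times> D \<union> {0, 1} \<times> X)"
    then show "L y \<in> U"
      using funcset_mem[OF M(2), of y] funcset_mem[OF K(2), of "snd y"] \<open>D \<subseteq> X\<close>
      by (auto simp: L_def)
  qed
  ultimately show ?thesis
    by (intro homotopic_with_canonI[where h = L]) (auto simp: L_def M_K Sigma_Un_distrib2)
qed

lemma homotopic_with_fixing_closedin:
  fixes K :: "real \<times> 'a::euclidean_space \<Rightarrow> 'b::euclidean_space" and M :: "real \<times> real \<times> 'a \<Rightarrow> 'b"
  assumes U: "ANR U" and D: "closedin (top_of_set X) D"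
    and K: "continuous_on ({0..1} \<times> X) K" "K \<in> {0..1} \<times> X \<rightarrow> U"
    and K0: "\<And>x. x \<in> X \<Longrightarrow> K (0, x) = f x" and K1: "\<And>x. x \<in> X \<Longrightarrow> K (1, x) = g x"
    and M: "continuous_on ({0..1} \<times> {0..1} \<times> D) M" "M \<in> {0..1} \<times> {0..1} \<times> D \<rightarrow> U"
    and M_K: "\<And>t x. x \<in> D \<Longrightarrow> M (0, t, x) = K (t, x)"
    and M_start: "\<And>s x. x \<in> D \<Longrightarrow> M (s, 0, x) = f x"
    and M_end: "\<And>s x. x \<in> D \<Longrightarrow> M (s, 1, x) = g x"
    and M_stationary: "\<And>t x. x \<in> D \<Longrightarrow> M (1, t, x) = f x"
  shows "homotopic_with_canon (\<lambda>h. \<forall>x\<in>D. h x = f x) X U f g"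
proof -
  have "D \<subseteq> X"
    using closedin_imp_subset[OF D] by simp
  define Y where "Y = {0..1::real} \<times> D \<union> {0, 1} \<times> X"
  have Y_closed: "closedin (top_of_set ({0..1} \<times> X)) Y"
    unfolding Y_def by (intro closedin_Un closedin_Times D) (auto intro: closed_subset)
  have "homotopic_with_canon (\<lambda>_. True) Y U K (\<lambda>y. if snd y \<in> D then M (1, y) else K y)"
    unfolding Y_def using \<open>D \<subseteq> X\<close>
    by (intro homotopic_on_frame[OF D K M M_K]) (auto simp: M_start M_end K0 K1)
  then obtain H where H: "continuous_on ({0..1} \<times> X) H" "H ` ({0..1} \<times> X) \<subseteq> U"
    and H_Y: "\<And>y. y \<in> Y \<Longrightarrow> H y = (if snd y \<in> D then M (1, y) else K y)"
    by (rule Borsuk_homotopy_extension_homotopic[OF Y_closed disjI2[OF U] K]) (rule that)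
  have H_D: "H (t, x) = f x" if "t \<in> {0..1}" "x \<in> D" for t x
    using H_Y[of "(t, x)"] that by (simp add: Y_def M_stationary)
  have H0: "H (0, x) = f x" if "x \<in> X" for x
    using H_Y[of "(0, x)"] that by (simp add: Y_def K0 M_start)
  have H1: "H (1, x) = g x" if "x \<in> X" for x
    using H_Y[of "(1, x)"] that by (simp add: Y_def K1 M_end)
  show ?thesis
  proof (rule homotopic_with_canonI[where h = H])
    show "(\<forall>x\<in>D. h x = f x) \<longleftrightarrow> (\<forall>x\<in>D. k x = f x)" if "\<And>x. x \<in> X \<Longrightarrow> h x = k x" for h k
      using that \<open>D \<subseteq> X\<close> by (simp add: subset_iff)
    show "H \<in> {0..1} \<times> X \<rightarrow> U"
      using H(2) by blast
    show "\<forall>x\<in>D. H (t, x) = f x" if "t \<in> {0..1}" for t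
      using H_D that by blast
  qed (use H(1) H0 H1 in simp_all)
qed

lemma homotopic_with_fixing_closedin_folded:
  fixes K :: "real \<times> 'a::euclidean_space \<Rightarrow> 'b::euclidean_space" and \<gamma> :: "real \<times> 'a \<Rightarrow> 'b"
  assumes U: "ANR U" and D: "closedin (top_of_set X) D"
    and K: "continuous_on ({0..1} \<times> X) K" "K \<in> {0..1} \<times> X \<rightarrow> U"
    and K0: "\<And>x. x \<in> X \<Longrightarrow> K (0, x) = f x" and K1: "\<And>x. x \<in> X \<Longrightarrow> K (1, x) = g x"
    and \<gamma>: "continuous_on ({0..1} \<times> D) \<gamma>" "\<gamma> \<in> {0..1} \<times> D \<rightarrow> U"
    and \<gamma>0: "\<And>x. x \<in> D \<Longrightarrow> \<gamma> (0, x) = f x"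
    and K_folded: "\<And>t x. x \<in> D \<Longrightarrow> K (t, x) = \<gamma> (1 - \<bar>2 * t - 1\<bar>, x)"
  shows "homotopic_with_canon (\<lambda>h. \<forall>x\<in>D. h x = f x) X U f g"
proof -
  have "D \<subseteq> X"
    using closedin_imp_subset[OF D] by simp
  have fold_in: "(1 - s) * (1 - \<bar>2 * t - 1\<bar>) \<in> {0..1}" if "s \<in> {0..1}" "t \<in> {0..1::real}" for s t
  proof -
    have "0 \<le> 1 - s" "1 - s \<le> 1" "0 \<le> 1 - \<bar>2 * t - 1\<bar>" "1 - \<bar>2 * t - 1\<bar> \<le> 1"
      using that by auto
    then show ?thesis
      by (simp add: mult_le_one)
  qed
  have fold_pair_in: "((1 - fst y) * (1 - \<bar>2 * fst (snd y) - 1\<bar>), snd (snd y)) \<in> {0..1} \<times> D"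
    if "y \<in> {0..1::real} \<times> {0..1::real} \<times> D" for y
    using that fold_in[of "fst y" "fst (snd y)"] by (auto simp: mem_Times_iff)
  have g_eq_f: "g x = f x" if "x \<in> D" for x
    using K1[of x] K_folded[OF that, of 1] \<gamma>0[OF that] that \<open>D \<subseteq> X\<close> by auto
  \<comment> \<open>The factor \<open>1 - s\<close> shrinks the path-and-back \<open>t \<mapsto> \<gamma> (1 - \<bar>2 * t - 1\<bar>, x)\<close> to the constant path at \<open>f x\<close>.\<close>
  define M where "M = (\<lambda>(s::real, t::real, x). \<gamma> ((1 - s) * (1 - \<bar>2 * t - 1\<bar>), x))"
  show ?thesis
  proof (rule homotopic_with_fixing_closedin[OF U D K K0 K1, where M = M])
    show "continuous_on ({0..1} \<times> {0..1} \<times> D) M"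
      unfolding M_def case_prod_beta'
      by (intro continuous_on_compose2[OF \<gamma>(1)] continuous_intros image_subsetI fold_pair_in) auto
    show "M \<in> {0..1} \<times> {0..1} \<times> D \<rightarrow> U"
      unfolding M_def case_prod_beta'
      by (intro Pi_I funcset_mem[OF \<gamma>(2)] fold_pair_in)
    show "M (0, t, x) = K (t, x)" if "x \<in> D" for t x
      using that by (simp add: M_def K_folded)
    show "M (s, 0, x) = f x" "M (1, t, x) = f x" "M (s, 1, x) = g x" if "x \<in> D" for s t x
      using that by (simp_all add: M_def \<gamma>0 g_eq_f)
  qed
qed

lemma homotopy_folding_on_diagonal:
  fixes K :: "real \<times> ('a::topological_space \<times> 'a) \<Rightarrow> 'a \<times> 'a"
  assumes K: "continuous_on ({0..1} \<times> (S \<times> S)) K" "K \<in> {0..1} \<times> (S \<times> S) \<rightarrow> S \<times> S"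
    and K0: "\<And>z. z \<in> S \<times> S \<Longrightarrow> K (0, z) = f z" and K1: "\<And>z. z \<in> S \<times> S \<Longrightarrow> K (1, z) = g z"
    and f_diag: "\<And>x. x \<in> S \<Longrightarrow> f (x, x) = (x, x)" and g_diag: "\<And>x. x \<in> S \<Longrightarrow> g (x, x) = (x, x)"
  obtains K' where "continuous_on ({0..1} \<times> (S \<times> S)) K'" "K' \<in> {0..1} \<times> (S \<times> S) \<rightarrow> S \<times> S"
    "\<And>z. z \<in> S \<times> S \<Longrightarrow> K' (0, z) = f z" "\<And>z. z \<in> S \<times> S \<Longrightarrow> K' (1, z) = g z"
    "\<And>t x. x \<in> S \<Longrightarrow> K' (t, x, x) = K (1 - \<bar>2 * t - 1\<bar>, x, x)"
proof -
  have g_cont: "continuous_on (S \<times> S) g"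
    using continuous_on_o_Pair[OF K(1), of 1] by (simp add: o_def K1 cong: continuous_on_cong)
  have g_in: "g z \<in> S \<times> S" if "z \<in> S \<times> S" for z
    using funcset_mem[OF K(2), of "(1, z)"] that by (simp add: K1)
  define Q where "Q = (\<lambda>(u, z). diagonal_split K (1 - u, g z))"
  have shift_in: "(1 - fst y, g (snd y)) \<in> {0..1} \<times> (S \<times> S)" if "y \<in> {0..1::real} \<times> (S \<times> S)" for y
    using that g_in[of "snd y"] by (simp add: mem_Times_iff del: mem_Sigma_iff)
  have Q_cont: "continuous_on ({0..1} \<times> (S \<times> S)) Q"
    unfolding Q_def case_prod_beta'
    by (intro continuous_on_compose2[OF continuous_on_diagonal_split[OF K(1)]] image_subsetI shift_in)
      (auto intro!: continuous_intros continuous_on_compose2[OF g_cont])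
  have Q_in: "Q \<in> {0..1} \<times> (S \<times> S) \<rightarrow> S \<times> S"
    unfolding Q_def case_prod_beta'
    by (intro Pi_I funcset_mem[OF diagonal_split_in_funspace[OF K(2)]] shift_in)
  have Q0: "Q (0, z) = g z" and Q1: "Q (1, z) = g z" if "z \<in> S \<times> S" for z
    using diagonal_split_eq[of S K, OF _ g_in[OF that]] by (simp_all add: Q_def K0 K1 f_diag g_diag)
  define K' where "K' = (\<lambda>(t, z). if t \<le> 1/2 then K (2 * t, z) else Q (2 * t - 1, z))"
  show ?thesis
  proof
    show "continuous_on ({0..1} \<times> (S \<times> S)) K'"
      unfolding K'_def by (rule continuous_on_homotopy_join[OF K(1) Q_cont]) (simp add: K1 Q0)
    show "K' \<in> {0..1} \<times> (S \<times> S) \<rightarrow> S \<times> S"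
    proof
      fix y
      assume y: "y \<in> {0..1::real} \<times> (S \<times> S)"
      then show "K' y \<in> S \<times> S"
        using funcset_mem[OF K(2), of "(2 * fst y, snd y)"] funcset_mem[OF Q_in, of "(2 * fst y - 1, snd y)"]
        by (auto simp: K'_def case_prod_beta')
    qed
    show "K' (0, z) = f z" "K' (1, z) = g z" if "z \<in> S \<times> S" for z
      using that by (simp_all add: K'_def K0 Q1)
    show "K' (t, x, x) = K (1 - \<bar>2 * t - 1\<bar>, x, x)" if "x \<in> S" for t x
      using that by (auto simp: K'_def Q_def g_diag)
  qed
qed

theorem homotopic_fixing_diagonal_if_homotopic:
  fixes f g :: "'a::euclidean_space \<times> 'a \<Rightarrow> 'a \<times> 'a"
  assumes S: "ANR S"
    and f_diag: "\<And>x. x \<in> S \<Longrightarrow> f (x, x) = (x, x)" and g_diag: "\<And>x. x \<in> S \<Longrightarrow> g (x, x) = (x, x)"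
    and hom: "homotopic_with_canon (\<lambda>_. True) (S \<times> S) (S \<times> S) f g"
  shows "homotopic_with_canon (\<lambda>h. \<forall>x\<in>S. h (x, x) = (x, x)) (S \<times> S) (S \<times> S) f g"
proof -
  obtain K :: "real \<times> ('a \<times> 'a) \<Rightarrow> 'a \<times> 'a"
    where K: "continuous_on ({0..1} \<times> (S \<times> S)) K" "K \<in> {0..1} \<times> (S \<times> S) \<rightarrow> S \<times> S"
    and K0: "\<And>z. K (0, z) = f z" and K1: "\<And>z. K (1, z) = g z"
    using homotopic_with_canonE[OF hom] by metis
  obtain K' :: "real \<times> ('a \<times> 'a) \<Rightarrow> 'a \<times> 'a"
    where K': "continuous_on ({0..1} \<times> (S \<times> S)) K'" "K' \<in> {0..1} \<times> (S \<times> S) \<rightarrow> S \<times> S"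
    "\<And>z. z \<in> S \<times> S \<Longrightarrow> K' (0, z) = f z" "\<And>z. z \<in> S \<times> S \<Longrightarrow> K' (1, z) = g z"
    and K'_diag: "\<And>t x. x \<in> S \<Longrightarrow> K' (t, x, x) = K (1 - \<bar>2 * t - 1\<bar>, x, x)"
    using homotopy_folding_on_diagonal[OF K K0 K1 f_diag g_diag] by metis
  define D where "D = (\<lambda>x. (x, x)) ` S"
  have D_closed: "closedin (top_of_set (S \<times> S)) D"
  proof -
    have "D = (S \<times> S) \<inter> {y. \<exists>x. y = (x, x)}"
      by (auto simp: D_def)
    then show ?thesis
      by (simp add: closedin_closed_Int closed_diagonal)
  qed
  have "D \<subseteq> S \<times> S"
    by (auto simp: D_def)
  then have "homotopic_with_canon (\<lambda>h. \<forall>z\<in>D. h z = f z) (S \<times> S) (S \<times> S) f g"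
    using K(2) by (intro homotopic_with_fixing_closedin_folded[OF ANR_Times[OF S S] D_closed K', where \<gamma> = K]
        continuous_on_subset[OF K(1)]) (auto simp: D_def K0 f_diag K'_diag)
  then show ?thesis
    by (rule homotopic_with_mono) (auto simp: D_def f_diag)
qed

theorem theorem1p1:
  fixes f g :: "'a::euclidean_space \<times> 'a \<Rightarrow> 'a \<times> 'a" and p :: 'a
  assumes "DIM('a) \<ge> 2"
    and "p \<in> sphere 0 1"
    and "\<forall>x\<in>sphere 0 1. f (x, x) = (x, x)"
    and "\<forall>x\<in>sphere 0 1. g (x, x) = (x, x)"
    and "homotopic_with_canon (\<lambda>h. h (p, p) = (p, p))
           (sphere 0 1 \<times> sphere 0 1) (sphere 0 1 \<times> sphere 0 1) f g"
  shows "homotopic_with_canon (\<lambda>h. \<forall>x\<in>sphere 0 1. h (x, x) = (x, x))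
           (sphere 0 1 \<times> sphere 0 1) (sphere 0 1 \<times> sphere 0 1) f g"
proof (rule homotopic_fixing_diagonal_if_homotopic)
  show "homotopic_with_canon (\<lambda>_. True) (sphere 0 1 \<times> sphere 0 1) (sphere 0 1 \<times> sphere 0 1) f g"
    using assms(5) by (rule homotopic_with_mono) simp
qed (use assms(3,4) in \<open>simp_all add: ANR_sphere\<close>)

end
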